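(* Let $2\le k\le n-1$ and let $G$ be a connected graph with $n$ vertices and chromatic number $k$ (or, alternatively, clique number $k$). Then $$\sigma_2(G)\ge\begin{cases}2n+2k^2-6k+2 & \text{if } 2\le k\le\lfloor\frac{n+1}{2}\rfloor,\\ (8k-3)n-2n^2-6k^2+4k-1 & \text{if } \lfloor\frac{n+1}2\rfloor<k<\lceil\frac{2n+1}{3}\rceil,\\ 2(k-1)n-\frac{3k^2}{2}+\frac{5k}{2}-1 & \text{if }\lceil\frac{2n+1}3\rceil\le k\le n-1.\end{cases}$$ Equality holds if and only if $G=K_s\vee(K_{k-s}+\overline{K}_{n-k})$, where $s=1$ in the first case, $s\in\{4k-2n-2,\,4k-2n-1\}$ in the second case, and $s=k-1$ in the third case.
   Context: All graphs are finite, simple, undirected. For a connected graph $G$ and $u\in V(G)$, $\varepsilon_G(u)=\max_v d_G(u,v)$, and $\sigma_2(G)=\sum_{uv\in E(G)}\varepsilon_G(u)\varepsilon_G(v)$. $K_r$ is the complete graph, $\overline{K}_r$ the edgeless graph on $r$ vertices; $G+H$ is the disjoint union, and $G\vee H$ (the join) is obtained from $G+H$ by adding all edges between $V(G)$ and $V(H)$. *)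

theory Defs
  imports Complex_Main
begin

type_synonym 'a graph = "'a set \<times> 'a set set"

definition verts :: "'a graph \<Rightarrow> 'a set" where "verts G = fst G"
definition edges :: "'a graph \<Rightarrow> 'a set set" where "edges G = snd G"

definition simple_graph :: "'a graph \<Rightarrow> bool" where
  "simple_graph G \<longleftrightarrow> finite (verts G) \<and>
     (\<forall>e\<in>edges G. \<exists>u v. e = {u, v} \<and> u \<noteq> v \<and> u \<in> verts G \<and> v \<in> verts G)"

definition adj :: "'a graph \<Rightarrow> 'a \<Rightarrow> 'a \<Rightarrow> bool" where
  "adj G u v \<longleftrightarrow> {u, v} \<in> edges G"

definition walk :: "'a graph \<Rightarrow> 'a list \<Rightarrow> bool" where
  "walk G xs \<longleftrightarrow> xs \<noteq> [] \<and> set xs \<subseteq> verts G \<and>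
     (\<forall>i. Suc i < length xs \<longrightarrow> adj G (xs ! i) (xs ! Suc i))"

definition connected_graph :: "'a graph \<Rightarrow> bool" where
  "connected_graph G \<longleftrightarrow> verts G \<noteq> {} \<and>
     (\<forall>u\<in>verts G. \<forall>v\<in>verts G. \<exists>xs. walk G xs \<and> hd xs = u \<and> last xs = v)"

definition gdist :: "'a graph \<Rightarrow> 'a \<Rightarrow> 'a \<Rightarrow> nat" where
  "gdist G u v = (LEAST m. \<exists>xs. walk G xs \<and> hd xs = u \<and> last xs = v \<and> length xs = Suc m)"

definition ecc :: "'a graph \<Rightarrow> 'a \<Rightarrow> nat" where
  "ecc G u = Max ((\<lambda>v. gdist G u v) ` verts G)"

definition sigma2 :: "'a graph \<Rightarrow> nat" where
  "sigma2 G = (\<Sum>e\<in>edges G. \<Prod>x\<in>e. ecc G x)"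

definition proper_coloring :: "'a graph \<Rightarrow> ('a \<Rightarrow> nat) \<Rightarrow> nat \<Rightarrow> bool" where
  "proper_coloring G c q \<longleftrightarrow> (\<forall>v\<in>verts G. c v < q) \<and>
     (\<forall>u v. adj G u v \<longrightarrow> c u \<noteq> c v)"

definition chromatic_number :: "'a graph \<Rightarrow> nat" where
  "chromatic_number G = (LEAST q. \<exists>c. proper_coloring G c q)"

definition is_clique :: "'a graph \<Rightarrow> 'a set \<Rightarrow> bool" where
  "is_clique G C \<longleftrightarrow> C \<subseteq> verts G \<and> (\<forall>u\<in>C. \<forall>v\<in>C. u \<noteq> v \<longrightarrow> adj G u v)"

definition clique_number :: "'a graph \<Rightarrow> nat" where
  "clique_number G = Max (card ` {C. is_clique G C})"

definition complete_graph :: "nat \<Rightarrow> nat graph" where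
  "complete_graph r = ({..<r}, {{u, v} | u v. u < r \<and> v < r \<and> u \<noteq> v})"

definition edgeless_graph :: "nat \<Rightarrow> nat graph" where
  "edgeless_graph r = ({..<r}, {})"

definition disj_union :: "'a graph \<Rightarrow> 'b graph \<Rightarrow> ('a + 'b) graph" where
  "disj_union G H = (Inl ` verts G \<union> Inr ` verts H,
                      (\<lambda>e. Inl ` e) ` edges G \<union> (\<lambda>e. Inr ` e) ` edges H)"

definition graph_join :: "'a graph \<Rightarrow> 'b graph \<Rightarrow> ('a + 'b) graph" where
  "graph_join G H = (verts (disj_union G H),
     edges (disj_union G H) \<union> {{Inl u, Inr v} | u v. u \<in> verts G \<and> v \<in> verts H})"

definition graph_iso :: "'a graph \<Rightarrow> 'b graph \<Rightarrow> bool" where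
  "graph_iso G H \<longleftrightarrow> (\<exists>f. bij_betw f (verts G) (verts H) \<and>
     (\<forall>u\<in>verts G. \<forall>v\<in>verts G. adj G u v \<longleftrightarrow> adj H (f u) (f v)))"

definition extremal_graph :: "nat \<Rightarrow> nat \<Rightarrow> nat \<Rightarrow> (nat + (nat + nat)) graph" where
  "extremal_graph n k s =
     graph_join (complete_graph s) (disj_union (complete_graph (k - s)) (edgeless_graph (n - k)))"

end

theory Submission
  imports Defs
begin

text \<open>
  A vertex has eccentricity 1 exactly when it is universal. If \<open>G\<close> has \<open>t \<ge> 1\<close> universal
  vertices \<open>U\<close>, all other vertices have eccentricity 2, so
  \<open>\<sigma>\<^sub>2(G) = t(t - 1)/2 + 2t(n - t) + 4 |E(G - U)|\<close>. A clique on \<open>k\<close> vertices, respectively a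
  \<open>k\<close>-chromatic graph, leaves in \<open>G - U\<close> at least \<open>k - t\<close> vertices inducing minimum degree
  \<open>k - t - 1\<close> (a clique, respectively a critical subgraph), hence \<open>2 |E(G - U)| \<ge> (k - t)(k - t - 1)\<close>,
  with equality only if the edges of \<open>G - U\<close> form a single \<open>K\<^bsub>k-t\<^esub>\<close>, i.e. \<open>G\<close> is the extremal
  graph for \<open>s = t\<close>. Without universal vertices every eccentricity is at least 2, which gives a
  bound above the value for \<open>t = 1\<close>. What remains is to minimise the resulting convex quadratic
  in \<open>t\<close> over \<open>1 \<le> t \<le> k - 1\<close>; its vertex \<open>t = 4k - 2n - 3/2\<close> produces the three cases.
\<close>

definition universal_verts :: "'a graph \<Rightarrow> 'a set" where
  "universal_verts G = {u \<in> verts G. \<forall>v\<in>verts G. v \<noteq> u \<longrightarrow> adj G u v}"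

definition nbhd :: "'a graph \<Rightarrow> 'a set \<Rightarrow> 'a \<Rightarrow> 'a set" where
  "nbhd G S u = {v \<in> S. adj G u v}"

text \<open>\<open>degree_sum G S\<close> is twice the number of edges of the subgraph induced by \<open>S\<close>.\<close>
definition degree_sum :: "'a graph \<Rightarrow> 'a set \<Rightarrow> nat" where
  "degree_sum G S = (\<Sum>u\<in>S. card (nbhd G S u))"

definition colorable :: "'a graph \<Rightarrow> 'a set \<Rightarrow> nat \<Rightarrow> bool" where
  "colorable G S q \<longleftrightarrow>
     (\<exists>c. (\<forall>v\<in>S. c v < q) \<and> (\<forall>u\<in>S. \<forall>v\<in>S. adj G u v \<longrightarrow> c u \<noteq> c v))"

section \<open>The quadratic bound\<close>

text \<open>For \<open>1 \<le> t < k < n\<close> this is \<open>\<sigma>\<^sub>2\<close> of \<open>extremal_graph n k t\<close>: its \<open>t\<close> universal vertices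
  have eccentricity 1 and all other vertices eccentricity 2.\<close>
definition join_sigma2 :: "nat \<Rightarrow> nat \<Rightarrow> nat \<Rightarrow> real" where
  "join_sigma2 n k t = real t * (real t - 1) / 2 + 2 * real t * (real n - real t)
     + 2 * (real k - real t) * (real k - real t - 1)"

lemma join_sigma2_expand:
  "join_sigma2 n k t = real t ^ 2 / 2 + (2 * real n - 4 * real k + 3 / 2) * real t
     + 2 * real k ^ 2 - 2 * real k"
  by (simp add: join_sigma2_def power2_eq_square field_simps)

lemma join_sigma2_min_small_k:
  assumes k: "2 * k \<le> n + 1" and t: "1 \<le> t"
  shows "2 * real n + 2 * real k ^ 2 - 6 * real k + 2 \<le> join_sigma2 n k t"
    and "join_sigma2 n k t = 2 * real n + 2 * real k ^ 2 - 6 * real k + 2 \<longleftrightarrow> t = 1"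
proof -
  have pos: "0 < real t + 4 * real n - 8 * real k + 4" using k t by linarith
  have "join_sigma2 n k t - (2 * real n + 2 * real k ^ 2 - 6 * real k + 2)
      = (real t - 1) * (real t + 4 * real n - 8 * real k + 4) / 2"
    by (simp add: join_sigma2_expand power2_eq_square field_simps)
  moreover have "0 \<le> (real t - 1) * (real t + 4 * real n - 8 * real k + 4)"
    using pos t by simp
  ultimately show "2 * real n + 2 * real k ^ 2 - 6 * real k + 2 \<le> join_sigma2 n k t"
    and "join_sigma2 n k t = 2 * real n + 2 * real k ^ 2 - 6 * real k + 2 \<longleftrightarrow> t = 1"
    using pos by auto
qed

lemma join_sigma2_min_medium_k:
  "(8 * real k - 3) * real n - 2 * real n ^ 2 - 6 * real k ^ 2 + 4 * real k - 1 \<le> join_sigma2 n k t"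
  "join_sigma2 n k t = (8 * real k - 3) * real n - 2 * real n ^ 2 - 6 * real k ^ 2 + 4 * real k - 1
     \<longleftrightarrow> int t = 4 * int k - 2 * int n - 2 \<or> int t = 4 * int k - 2 * int n - 1"
proof -
  define d :: int where "d = int t - (4 * int k - 2 * int n - 2)"
  have "join_sigma2 n k t - ((8 * real k - 3) * real n - 2 * real n ^ 2 - 6 * real k ^ 2 + 4 * real k - 1)
      = real_of_int (d * (d - 1)) / 2"
    by (simp add: d_def join_sigma2_expand power2_eq_square field_simps)
  moreover have "0 \<le> real_of_int (d * (d - 1))"
    by (cases "0 < d") (simp_all add: mult_nonpos_nonpos)
  moreover have "real_of_int (d * (d - 1)) = 0 \<longleftrightarrow>
      int t = 4 * int k - 2 * int n - 2 \<or> int t = 4 * int k - 2 * int n - 1"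
    unfolding d_def of_int_eq_0_iff by auto
  ultimately show
    "(8 * real k - 3) * real n - 2 * real n ^ 2 - 6 * real k ^ 2 + 4 * real k - 1 \<le> join_sigma2 n k t"
    "join_sigma2 n k t = (8 * real k - 3) * real n - 2 * real n ^ 2 - 6 * real k ^ 2 + 4 * real k - 1
       \<longleftrightarrow> int t = 4 * int k - 2 * int n - 2 \<or> int t = 4 * int k - 2 * int n - 1"
    by auto
qed

lemma join_sigma2_min_large_k:
  assumes k: "2 * n + 1 \<le> 3 * k" and t: "t < k"
  shows "2 * (real k - 1) * real n - 3 * real k ^ 2 / 2 + 5 * real k / 2 - 1 \<le> join_sigma2 n k t"
    and "join_sigma2 n k t = 2 * (real k - 1) * real n - 3 * real k ^ 2 / 2 + 5 * real k / 2 - 1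
           \<longleftrightarrow> t = k - 1"
proof -
  define a where "a = real k - 1 - real t"
  have a: "0 \<le> a" "a = 0 \<longleftrightarrow> t = k - 1" using t by (auto simp: a_def of_nat_diff)
  have pos: "0 < 6 * real k - 4 * real n - 1 + a" using k a(1) by linarith
  have "join_sigma2 n k t - (2 * (real k - 1) * real n - 3 * real k ^ 2 / 2 + 5 * real k / 2 - 1)
      = a * (6 * real k - 4 * real n - 1 + a) / 2"
    by (simp add: a_def join_sigma2_expand power2_eq_square field_simps)
  moreover have "0 \<le> a * (6 * real k - 4 * real n - 1 + a)" using a(1) pos by simp
  ultimately show "2 * (real k - 1) * real n - 3 * real k ^ 2 / 2 + 5 * real k / 2 - 1 \<le> join_sigma2 n k t"
    and "join_sigma2 n k t = 2 * (real k - 1) * real n - 3 * real k ^ 2 / 2 + 5 * real k / 2 - 1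
           \<longleftrightarrow> t = k - 1"
    using a(2) pos by auto
qed

section \<open>The extremal graphs\<close>

lemma doubleton_eq_image_iff:
  assumes "inj f"
  shows "{x, y} = f ` e \<longleftrightarrow> (\<exists>u v. x = f u \<and> y = f v \<and> e = {u, v})"
proof
  assume xy: "{x, y} = f ` e"
  then obtain u v where uv: "u \<in> e" "x = f u" "v \<in> e" "y = f v"
    by (metis image_iff insertI1 insert_commute)
  then have "f ` e = f ` {u, v}" using xy by simp
  then have "e = {u, v}" using assms by (simp only: inj_image_eq_iff)
  then show "\<exists>u v. x = f u \<and> y = f v \<and> e = {u, v}" using uv by (intro exI) simp
qed auto

lemma doubleton_in_image_image_iff:
  assumes "inj f"
  shows "{x, y} \<in> image f ` E \<longleftrightarrow> (\<exists>u v. x = f u \<and> y = f v \<and> {u, v} \<in> E)"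
proof
  assume "{x, y} \<in> image f ` E"
  then obtain e where "e \<in> E" "{x, y} = f ` e" by auto
  then show "\<exists>u v. x = f u \<and> y = f v \<and> {u, v} \<in> E"
    by (auto simp: doubleton_eq_image_iff[OF assms])
next
  assume "\<exists>u v. x = f u \<and> y = f v \<and> {u, v} \<in> E"
  then obtain u v where "x = f u" "y = f v" "{u, v} \<in> E" by blast
  then show "{x, y} \<in> image f ` E" by (auto intro: image_eqI[of _ _ "{u, v}"])
qed

lemma adj_disj_union:
  "adj (disj_union G H) x y \<longleftrightarrow>
     (\<exists>u v. x = Inl u \<and> y = Inl v \<and> adj G u v) \<or> (\<exists>u v. x = Inr u \<and> y = Inr v \<and> adj H u v)"
  by (simp add: adj_def disj_union_def edges_def doubleton_in_image_image_iff)

lemma adj_graph_join: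
  "adj (graph_join G H) x y \<longleftrightarrow> adj (disj_union G H) x y \<or>
     (\<exists>u\<in>verts G. \<exists>v\<in>verts H. x = Inl u \<and> y = Inr v \<or> x = Inr v \<and> y = Inl u)"
  by (auto simp: adj_def graph_join_def edges_def doubleton_eq_iff)

lemma verts_graph_join: "verts (graph_join G H) = Inl ` verts G \<union> Inr ` verts H"
  by (simp add: graph_join_def disj_union_def verts_def)

lemma verts_disj_union: "verts (disj_union G H) = Inl ` verts G \<union> Inr ` verts H"
  by (simp add: disj_union_def verts_def)

lemma adj_complete_graph: "adj (complete_graph r) u v \<longleftrightarrow> u < r \<and> v < r \<and> u \<noteq> v"
  by (auto simp: adj_def complete_graph_def edges_def doubleton_eq_iff)

lemma adj_edgeless_graph: "\<not> adj (edgeless_graph r) u v"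
  by (simp add: adj_def edgeless_graph_def edges_def)

lemma verts_complete_graph [simp]: "verts (complete_graph r) = {..<r}"
  by (simp add: complete_graph_def verts_def)

lemma verts_edgeless_graph [simp]: "verts (edgeless_graph r) = {..<r}"
  by (simp add: edgeless_graph_def verts_def)

definition join_shape :: "'a graph \<Rightarrow> 'a set \<Rightarrow> 'a set \<Rightarrow> bool" where
  "join_shape G A B \<longleftrightarrow> A \<subseteq> verts G \<and> B \<subseteq> verts G \<and> A \<inter> B = {} \<and>
     (\<forall>u\<in>verts G. \<forall>v\<in>verts G. adj G u v \<longleftrightarrow> u \<noteq> v \<and> (u \<in> A \<or> v \<in> A \<or> u \<in> B \<and> v \<in> B))"

lemma join_shape_extremal_graph:
  "join_shape (extremal_graph n k s) (Inl ` {..<s}) (Inr ` Inl ` {..<k - s})"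
  unfolding join_shape_def extremal_graph_def
  by (auto simp: verts_graph_join verts_disj_union adj_graph_join adj_disj_union
      adj_complete_graph adj_edgeless_graph)

lemma card_verts_extremal_graph:
  assumes "s \<le> k" "k \<le> n"
  shows "card (verts (extremal_graph n k s)) = n"
proof -
  let ?B = "Inl ` {..<k - s} \<union> Inr ` {..<n - k} :: (nat + nat) set"
  have "card ?B = (k - s) + (n - k)"
    by (subst card_Un_disjoint) (auto simp: card_image)
  then have "card (Inl ` {..<s} \<union> Inr ` ?B) = s + ((k - s) + (n - k))"
    by (subst card_Un_disjoint) (auto simp: card_image)
  then show ?thesis
    using assms unfolding extremal_graph_def verts_graph_join verts_disj_union by simp
qed

lemma join_shape_adj:
  "join_shape G A B \<Longrightarrow> u \<in> verts G \<Longrightarrow> v \<in> verts G \<Longrightarrow>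
     adj G u v \<longleftrightarrow> u \<noteq> v \<and> (u \<in> A \<or> v \<in> A \<or> u \<in> B \<and> v \<in> B)"
  unfolding join_shape_def by blast

lemma graph_iso_join_shapes_bij:
  assumes G: "join_shape G A B" and H: "join_shape H A' B'"
    and f: "bij_betw f (verts G) (verts H)"
    and fA: "\<And>v. v \<in> verts G \<Longrightarrow> f v \<in> A' \<longleftrightarrow> v \<in> A"
    and fB: "\<And>v. v \<in> verts G \<Longrightarrow> f v \<in> B' \<longleftrightarrow> v \<in> B"
  shows "graph_iso G H"
  unfolding graph_iso_def
proof (intro exI[of _ f] conjI ballI)
  fix u v assume uv: "u \<in> verts G" "v \<in> verts G"
  have "f u = f v \<longleftrightarrow> u = v" using f uv by (auto simp: bij_betw_def inj_on_def)
  moreover have "f u \<in> verts H" "f v \<in> verts H" using f uv by (auto simp: bij_betw_def)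
  ultimately show "adj G u v \<longleftrightarrow> adj H (f u) (f v)"
    using join_shape_adj[OF G uv] join_shape_adj[OF H] fA[OF uv(1)] fA[OF uv(2)] fB[OF uv(1)] fB[OF uv(2)]
    by simp
qed (rule f)

lemma graph_iso_join_shapes:
  assumes G: "join_shape G A B" and H: "join_shape H A' B'"
    and fin: "finite (verts G)" "finite (verts H)"
    and card: "card A = card A'" "card B = card B'" "card (verts G) = card (verts H)"
  shows "graph_iso G H"
proof -
  let ?R = "verts G - A - B" and ?R' = "verts H - A' - B'"
  have sub: "A \<subseteq> verts G" "B \<subseteq> verts G - A" "A' \<subseteq> verts H" "B' \<subseteq> verts H - A'"
    using G H by (auto simp: join_shape_def)
  have finite: "finite A" "finite B" "finite ?R" "finite A'" "finite B'" "finite ?R'"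
    using sub fin by (meson finite_Diff finite_subset)+
  have "card ?R = card ?R'"
    using sub fin card by (simp add: card_Diff_subset finite_subset)
  then obtain hR where hR: "bij_betw hR ?R ?R'" using finite finite_same_card_bij by blast
  obtain hA where hA: "bij_betw hA A A'" using finite card finite_same_card_bij by blast
  obtain hB where hB: "bij_betw hB B B'" using finite card finite_same_card_bij by blast
  define f where "f v = (if v \<in> A then hA v else if v \<in> B then hB v else hR v)" for v
  have "bij_betw f A A'" using hA by (rule bij_betw_cong[THEN iffD1, rotated]) (simp add: f_def)
  moreover have "bij_betw f B B'"
    using hB sub by (intro bij_betw_cong[THEN iffD1, OF _ hB]) (auto simp: f_def)
  moreover have "bij_betw f ?R ?R'"
    by (intro bij_betw_cong[THEN iffD1, OF _ hR]) (auto simp: f_def)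
  ultimately have "bij_betw f (A \<union> (B \<union> ?R)) (A' \<union> (B' \<union> ?R'))"
    using sub by (intro bij_betw_combine) auto
  moreover have "A \<union> (B \<union> ?R) = verts G" "A' \<union> (B' \<union> ?R') = verts H" using sub by auto
  ultimately have f: "bij_betw f (verts G) (verts H)" by simp
  have "f v \<in> A' \<longleftrightarrow> v \<in> A" "f v \<in> B' \<longleftrightarrow> v \<in> B" if "v \<in> verts G" for v
    using that sub bij_betwE[OF hA] bij_betwE[OF hB] bij_betwE[OF hR] by (auto simp: f_def)
  then show ?thesis using graph_iso_join_shapes_bij[OF G H f] by blast
qed

lemma join_shape_iso_pullback:
  assumes iso: "graph_iso G H" and H: "join_shape H A' B'"
  shows "\<exists>A B. join_shape G A B \<and> card A = card A' \<and> card B = card B'"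
proof -
  obtain f where f: "bij_betw f (verts G) (verts H)"
    and adj: "\<forall>u\<in>verts G. \<forall>v\<in>verts G. adj G u v \<longleftrightarrow> adj H (f u) (f v)"
    using iso unfolding graph_iso_def by blast
  define A where "A = {v \<in> verts G. f v \<in> A'}"
  define B where "B = {v \<in> verts G. f v \<in> B'}"
  have sub: "A' \<subseteq> verts H" "B' \<subseteq> verts H" "A' \<inter> B' = {}" using H by (auto simp: join_shape_def)
  have surj: "f ` verts G = verts H" using f by (simp add: bij_betw_def)
  have "bij_betw f A A'" "bij_betw f B B'"
    unfolding A_def B_def by (rule bij_betw_subset[OF f], use sub surj in auto)+
  then have "card A = card A'" "card B = card B'" by (simp_all add: bij_betw_same_card)
  moreover have "join_shape G A B"
    unfolding join_shape_def
  proof (intro conjI ballI)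
    fix u v assume uv: "u \<in> verts G" "v \<in> verts G"
    have "f u = f v \<longleftrightarrow> u = v" using f uv by (auto simp: bij_betw_def inj_on_def)
    moreover have "f u \<in> verts H" "f v \<in> verts H" using f uv by (auto simp: bij_betw_def)
    ultimately show "adj G u v \<longleftrightarrow> u \<noteq> v \<and> (u \<in> A \<or> v \<in> A \<or> u \<in> B \<and> v \<in> B)"
      using adj uv join_shape_adj[OF H] by (simp add: A_def B_def)
  qed (use sub in \<open>auto simp: A_def B_def\<close>)
  ultimately show ?thesis by blast
qed

lemma universal_verts_join_shape:
  assumes G: "join_shape G A B" and B: "B \<noteq> {}" and R: "verts G - A - B \<noteq> {}"
  shows "universal_verts G = A"
proof
  show "A \<subseteq> universal_verts G"
    using G by (auto simp: universal_verts_def join_shape_def)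
  show "universal_verts G \<subseteq> A"
  proof
    fix u assume u: "u \<in> universal_verts G"
    then have uV: "u \<in> verts G" and uadj: "\<And>v. v \<in> verts G \<Longrightarrow> v \<noteq> u \<Longrightarrow> adj G u v"
      by (auto simp: universal_verts_def)
    obtain b where b: "b \<in> B" using B by blast
    obtain r where r: "r \<in> verts G - A - B" using R by blast
    have "b \<in> verts G" "b \<notin> A" using b G by (auto simp: join_shape_def)
    show "u \<in> A"
    proof (rule ccontr)
      assume "u \<notin> A"
      show False
      proof (cases "u \<in> B")
        case True
        then have "adj G u r" using r uadj by auto
        then show False using join_shape_adj[OF G uV] r True \<open>u \<notin> A\<close> by auto
      next
        case False
        then have "adj G u b" using b uadj \<open>b \<in> verts G\<close> by auto
        then show False using join_shape_adj[OF G uV \<open>b \<in> verts G\<close>] False \<open>u \<notin> A\<close> \<open>b \<notin> A\<close> by auto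
      qed
    qed
  qed
qed

lemma degree_sum_join_shape:
  assumes G: "join_shape G A B" and fin: "finite (verts G)"
  shows "degree_sum G (verts G - A) = card B * (card B - 1)"
proof -
  have sub: "B \<subseteq> verts G - A" using G by (auto simp: join_shape_def)
  have nb: "nbhd G (verts G - A) u = (if u \<in> B then B - {u} else {})" if "u \<in> verts G - A" for u
    using that sub join_shape_adj[OF G] by (auto simp: nbhd_def)
  have "degree_sum G (verts G - A) = (\<Sum>u\<in>verts G - A. if u \<in> B then card B - 1 else 0)"
    unfolding degree_sum_def using fin sub finite_subset by (intro sum.cong) (auto simp: nb)
  also have "\<dots> = (\<Sum>u\<in>B. card B - 1)"
    using fin sub by (simp add: sum.If_cases Int_absorb1)
  finally show ?thesis by simp
qed

lemma join_shape_imp_iso_extremal_graph: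
  assumes G: "join_shape G A B" "finite (verts G)"
    and card: "card A = s" "card B = k - s" "s \<le> k" "k \<le> card (verts G)"
  shows "graph_iso G (extremal_graph (card (verts G)) k s)"
  using card card_verts_extremal_graph[of s k "card (verts G)"]
  by (intro graph_iso_join_shapes[OF G(1) join_shape_extremal_graph G(2)])
    (auto simp: card_image extremal_graph_def verts_graph_join verts_disj_union)

section \<open>Simple graphs\<close>

locale sgraph =
  fixes G :: "'a graph"
  assumes simple: "simple_graph G"
begin

abbreviation "V \<equiv> verts G"
abbreviation "N \<equiv> nbhd G"

lemma finite_verts: "finite V"
  using simple by (simp add: simple_graph_def)

lemma adj_in_verts: "adj G u v \<Longrightarrow> u \<in> V \<and> v \<in> V \<and> u \<noteq> v"
  using simple unfolding simple_graph_def adj_def by (fastforce simp: doubleton_eq_iff)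

lemma adj_sym: "adj G u v \<longleftrightarrow> adj G v u"
  by (simp add: adj_def insert_commute)

lemma adj_irrefl [simp]: "\<not> adj G u u"
  using adj_in_verts by blast

lemma finite_edges: "finite (edges G)"
proof (rule finite_subset)
  show "edges G \<subseteq> Pow V" using simple unfolding simple_graph_def by auto
qed (simp add: finite_verts)

lemma nbhd_subset: "N S u \<subseteq> S"
  by (auto simp: nbhd_def)

lemma nbhd_mono: "S \<subseteq> T \<Longrightarrow> N S u \<subseteq> N T u"
  by (auto simp: nbhd_def)

lemma finite_nbhd: "finite S \<Longrightarrow> finite (N S u)"
  using finite_subset[OF nbhd_subset] .

lemma card_nbhd_le: "finite S \<Longrightarrow> u \<in> S \<Longrightarrow> card (N S u) \<le> card S - 1"
  using card_mono[of "S - {u}" "N S u"] adj_in_verts by (fastforce simp: nbhd_def)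

lemma double_sum_edges_prod:
  fixes h :: "'a \<Rightarrow> nat"
  shows "2 * (\<Sum>e\<in>edges G. \<Prod>x\<in>e. h x) = (\<Sum>u\<in>V. \<Sum>v\<in>N V u. h u * h v)"
proof -
  define P where "P = (SIGMA u:V. N V u)"
  have "(\<Sum>u\<in>V. \<Sum>v\<in>N V u. h u * h v) = (\<Sum>p\<in>P. h (fst p) * h (snd p))"
    unfolding P_def using finite_verts
    by (subst sum.Sigma) (auto simp: finite_nbhd case_prod_beta)
  also have "\<dots> = (\<Sum>e\<in>edges G. \<Sum>p\<in>{p\<in>P. {fst p, snd p} = e}. h (fst p) * h (snd p))"
    by (rule sum.group[symmetric])
      (auto simp: P_def nbhd_def adj_def finite_edges finite_verts finite_nbhd)
  also have "\<dots> = (\<Sum>e\<in>edges G. 2 * (\<Prod>x\<in>e. h x))"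
  proof (rule sum.cong[OF refl])
    fix e assume e: "e \<in> edges G"
    then obtain a b where ab: "e = {a, b}" "a \<noteq> b" "a \<in> V" "b \<in> V"
      using simple unfolding simple_graph_def by blast
    then have "{p\<in>P. {fst p, snd p} = e} = {(a, b), (b, a)}"
      using e by (auto simp: P_def nbhd_def adj_def doubleton_eq_iff insert_commute)
    then show "(\<Sum>p\<in>{p\<in>P. {fst p, snd p} = e}. h (fst p) * h (snd p)) = 2 * (\<Prod>x\<in>e. h x)"
      using ab by (simp add: mult.commute)
  qed
  finally show ?thesis by (simp add: sum_distrib_left)
qed

lemma gdist_le_walk:
  assumes "walk G xs" "hd xs = u" "last xs = v"
  shows "gdist G u v \<le> length xs - 1"
  unfolding gdist_def using assms by (intro Least_le exI[of _ xs]) (auto simp: walk_def)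

lemma gdist_le_1: "adj G u v \<Longrightarrow> gdist G u v \<le> 1"
  using gdist_le_walk[of "[u, v]" u v] adj_in_verts[of u v] by (simp add: walk_def less_Suc_eq)

lemma gdist_le_2: "adj G u x \<Longrightarrow> adj G x v \<Longrightarrow> gdist G u v \<le> 2"
  using gdist_le_walk[of "[u, x, v]" u v] adj_in_verts[of u x] adj_in_verts[of x v]
  by (simp add: walk_def less_Suc_eq nth_Cons split: nat.splits)

lemma ecc_le:
  assumes "V \<noteq> {}" "\<And>v. v \<in> V \<Longrightarrow> gdist G u v \<le> m"
  shows "ecc G u \<le> m"
  unfolding ecc_def using assms finite_verts by (subst Max_le_iff) auto

lemma ecc_ge:
  assumes "v \<in> V" "m \<le> gdist G u v"
  shows "m \<le> ecc G u"
  unfolding ecc_def using assms finite_verts by (subst Max_ge_iff) auto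

lemma colorable_insert:
  assumes col: "colorable G (S - {u}) r" and few: "card (N S u) < r" and S: "finite S"
  shows "colorable G S r"
proof -
  obtain c where c: "\<forall>v\<in>S - {u}. c v < r"
      "\<forall>x\<in>S - {u}. \<forall>y\<in>S - {u}. adj G x y \<longrightarrow> c x \<noteq> c y"
    using col unfolding colorable_def by blast
  have "card (c ` N S u) < card {..<r}"
    using le_less_trans[OF card_image_le[OF finite_nbhd[OF S]] few] by simp
  then have "\<not> {..<r} \<subseteq> c ` N S u"
    using card_mono[OF finite_imageI[OF finite_nbhd[OF S]], of "{..<r}" c u] by (meson leD)
  then obtain j where j: "j < r" "j \<notin> c ` N S u" by auto
  show ?thesis
    unfolding colorable_def
  proof (intro exI[of _ "c(u := j)"] conjI ballI impI)
    fix x y assume "x \<in> S" "y \<in> S" "adj G x y"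
    then show "(c(u := j)) x \<noteq> (c(u := j)) y"
      using c(2) j adj_in_verts[of x y] by (auto simp: nbhd_def adj_sym)
  qed (use c j in auto)
qed

lemma colorable_Un:
  assumes "colorable G A p" "colorable G B q"
  shows "colorable G (A \<union> B) (p + q)"
proof -
  obtain c1 where c1: "\<forall>v\<in>A. c1 v < p" "\<forall>u\<in>A. \<forall>v\<in>A. adj G u v \<longrightarrow> c1 u \<noteq> c1 v"
    using assms(1) unfolding colorable_def by blast
  obtain c2 where c2: "\<forall>v\<in>B. c2 v < q" "\<forall>u\<in>B. \<forall>v\<in>B. adj G u v \<longrightarrow> c2 u \<noteq> c2 v"
    using assms(2) unfolding colorable_def by blast
  define c where "c v = (if v \<in> A then c1 v else p + c2 v)" for v
  have "c v < p + q" if "v \<in> A \<union> B" for v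
    using that c1(1) c2(1) by (auto simp: c_def)
  moreover have "c u \<noteq> c v" if "u \<in> A \<union> B" "v \<in> A \<union> B" "adj G u v" for u v
    using that c1 c2 by (cases "u \<in> A"; cases "v \<in> A") (auto simp: c_def)
  ultimately show ?thesis unfolding colorable_def by blast
qed

lemma colorable_card: "finite S \<Longrightarrow> colorable G S (card S)"
  using ex_bij_betw_finite_nat[of S] adj_in_verts unfolding colorable_def bij_betw_def inj_on_def
  by (metis atLeastLessThan_iff imageI)

text \<open>In a minimal non-colourable subset every vertex has large degree, since a vertex of
  small degree could be coloured last.\<close>
lemma not_colorable_imp_min_degree_subset:
  assumes fin: "finite T" and nc: "\<not> colorable G T r"
  shows "\<exists>S\<subseteq>T. S \<noteq> {} \<and> (\<forall>u\<in>S. r \<le> card (N S u))"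
proof -
  let ?P = "\<lambda>m. \<exists>S. S \<subseteq> T \<and> \<not> colorable G S r \<and> card S = m"
  obtain S where S: "S \<subseteq> T" "\<not> colorable G S r" "card S = (LEAST m. ?P m)"
    using LeastI_ex[of ?P] nc by blast
  have finS: "finite S" using S(1) fin finite_subset by blast
  have minimal: "colorable G S' r" if "S' \<subseteq> T" "card S' < card S" for S'
  proof (rule ccontr)
    assume "\<not> colorable G S' r"
    then have "card S \<le> card S'" unfolding S(3) by (intro Least_le) (use that in blast)
    then show False using that by simp
  qed
  have "S \<noteq> {}" using S(2) by (auto simp: colorable_def)
  moreover have "r \<le> card (N S u)" if u: "u \<in> S" for u
  proof (rule ccontr)
    assume "\<not> r \<le> card (N S u)"
    moreover have "colorable G (S - {u}) r"
      using S(1) card_Diff1_less[OF finS u] by (intro minimal) auto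
    ultimately have "colorable G S r" using colorable_insert[of S u r] finS not_le by blast
    with S(2) show False by contradiction
  qed
  ultimately show ?thesis using S(1) by blast
qed

lemma clique_card_le_colors:
  assumes C: "is_clique G C" and col: "colorable G V q"
  shows "card C \<le> q"
proof -
  obtain c where c: "\<forall>v\<in>V. c v < q" "\<forall>u\<in>V. \<forall>v\<in>V. adj G u v \<longrightarrow> c u \<noteq> c v"
    using col unfolding colorable_def by blast
  have CV: "C \<subseteq> V" using C by (simp add: is_clique_def)
  have "inj_on c C"
    using C c(2) CV unfolding is_clique_def inj_on_def by blast
  then have "card C = card (c ` C)" by (simp add: card_image)
  also have "\<dots> \<le> card {..<q}" using c(1) CV by (intro card_mono) auto
  finally show ?thesis by simp
qed

lemma chromatic_number_eq_Least_colorable: "chromatic_number G = (LEAST q. colorable G V q)"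
proof -
  have "(\<exists>c. proper_coloring G c q) \<longleftrightarrow> colorable G V q" for q
    unfolding proper_coloring_def colorable_def using adj_in_verts by blast
  then show ?thesis unfolding chromatic_number_def by simp
qed

lemma colorable_chromatic_number: "colorable G V (chromatic_number G)"
  unfolding chromatic_number_eq_Least_colorable using colorable_card[OF finite_verts] by (rule LeastI)

lemma not_colorable_less_chromatic_number: "q < chromatic_number G \<Longrightarrow> \<not> colorable G V q"
  unfolding chromatic_number_eq_Least_colorable by (rule not_less_Least)

lemma finite_cliques: "finite {C. is_clique G C}"
  by (rule finite_subset[of _ "Pow V"]) (auto simp: is_clique_def finite_verts)

lemma clique_number_attained: "\<exists>C. is_clique G C \<and> card C = clique_number G"
proof -
  have "{C. is_clique G C} \<noteq> {}" by (auto simp: is_clique_def)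
  then have "clique_number G \<in> card ` {C. is_clique G C}"
    unfolding clique_number_def using finite_cliques by (intro Max_in) auto
  then show ?thesis by auto
qed

lemma clique_card_le_clique_number: "is_clique G C \<Longrightarrow> card C \<le> clique_number G"
  unfolding clique_number_def by (rule Max_ge[OF finite_imageI[OF finite_cliques]]) simp

lemma degree_sum_mono:
  assumes "finite T" "S \<subseteq> T"
  shows "degree_sum G S \<le> degree_sum G T"
proof -
  have "degree_sum G S \<le> (\<Sum>u\<in>S. card (N T u))"
    unfolding degree_sum_def using assms
    by (intro sum_mono card_mono finite_nbhd nbhd_mono) auto
  also have "\<dots> \<le> degree_sum G T"
    unfolding degree_sum_def using assms by (intro sum_mono2) auto
  finally show ?thesis .
qed

lemma degree_sum_ge_min_degree:
  assumes "finite S" "\<forall>u\<in>S. r \<le> card (N S u)"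
  shows "card S * r \<le> degree_sum G S"
  unfolding degree_sum_def using sum_mono[of S "\<lambda>_. r"] assms by simp

lemma degree_sum_eq_imp_edges_within:
  assumes T: "finite T" and S: "S \<subseteq> T" and eq: "degree_sum G S = degree_sum G T"
    and uv: "u \<in> T" "v \<in> T" "adj G u v"
  shows "u \<in> S \<and> v \<in> S"
proof -
  have finS: "finite S" using S T finite_subset by blast
  let ?dT = "\<lambda>u. card (N T u)"
  have le: "card (N S x) \<le> ?dT x" for x
    using T S by (intro card_mono finite_nbhd nbhd_mono)
  have split: "degree_sum G T = (\<Sum>x\<in>T - S. ?dT x) + (\<Sum>x\<in>S. ?dT x)"
    unfolding degree_sum_def using sum.subset_diff[OF S T] .
  have mono: "degree_sum G S \<le> (\<Sum>x\<in>S. ?dT x)"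
    unfolding degree_sum_def using le by (intro sum_mono)
  have outside: "N T x = {}" if "x \<in> T - S" for x
  proof -
    have "(\<Sum>x\<in>T - S. ?dT x) = 0" using eq split mono by linarith
    then have "?dT x = 0" using T that by simp
    then show ?thesis using finite_nbhd[OF T] by simp
  qed
  have inside: "N T x = N S x" if x: "x \<in> S" for x
  proof (rule ccontr)
    assume "N T x \<noteq> N S x"
    then have "card (N S x) < ?dT x"
      using nbhd_mono[OF S] finite_nbhd[OF T] by (intro psubset_card_mono) auto
    then have "degree_sum G S < (\<Sum>x\<in>S. ?dT x)"
      unfolding degree_sum_def using le x finS by (intro sum_strict_mono_ex1) auto
    then show False using eq split by linarith
  qed
  have "v \<in> N T u" using uv by (simp add: nbhd_def)
  then have "u \<in> S" using outside uv(1) by blast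
  moreover have "v \<in> S" using inside[OF \<open>u \<in> S\<close>] \<open>v \<in> N T u\<close> nbhd_subset by blast
  ultimately show ?thesis ..
qed

lemma full_degree_imp_clique:
  assumes "S \<subseteq> V" "\<forall>u\<in>S. card S - 1 \<le> card (N S u)"
  shows "is_clique G S"
  unfolding is_clique_def
proof (intro conjI ballI impI)
  fix u v assume uv: "u \<in> S" "v \<in> S" "u \<noteq> v"
  have finS: "finite S" using assms(1) finite_verts finite_subset by blast
  have "N S u \<subseteq> S - {u}" by (auto simp: nbhd_def)
  moreover have "card (S - {u}) \<le> card (N S u)" using assms(2) uv(1) finS by simp
  ultimately have "N S u = S - {u}" using finS by (intro card_seteq) auto
  then show "adj G u v" using uv by (auto simp: nbhd_def)
qed (rule assms(1))

text \<open>For \<open>r > 0\<close> the clique is \<open>S\<close> itself; for \<open>r = 0\<close> any single vertex of \<open>S\<close> will do.\<close>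
lemma degree_sum_eq_imp_clique:
  assumes T: "finite T" "T \<subseteq> V" and S: "S \<subseteq> T" "r + 1 \<le> card S"
    and deg: "\<forall>u\<in>S. r \<le> card (N S u)" and eq: "degree_sum G T = (r + 1) * r"
  shows "\<exists>C\<subseteq>T. card C = r + 1 \<and> is_clique G C \<and> (\<forall>u\<in>T. \<forall>v\<in>T. adj G u v \<longrightarrow> u \<in> C \<and> v \<in> C)"
proof (cases "r = 0")
  case True
  obtain w where w: "w \<in> S" using S(2) by fastforce
  have "degree_sum G {w} = degree_sum G T"
    using eq True by (simp add: degree_sum_def nbhd_def)
  then have "\<forall>u\<in>T. \<forall>v\<in>T. adj G u v \<longrightarrow> u \<in> {w} \<and> v \<in> {w}"
    using degree_sum_eq_imp_edges_within[OF T(1)] w S(1) by blast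
  moreover have "is_clique G {w}" using w S(1) T(2) by (auto simp: is_clique_def)
  ultimately show ?thesis using w S(1) True by (intro exI[of _ "{w}"]) auto
next
  case False
  have finS: "finite S" using S(1) T(1) finite_subset by blast
  have "card S * r \<le> degree_sum G S" by (rule degree_sum_ge_min_degree[OF finS deg])
  also have "\<dots> \<le> degree_sum G T" by (rule degree_sum_mono[OF T(1) S(1)])
  finally have le: "card S * r \<le> (r + 1) * r" using eq by simp
  then have "card S \<le> r + 1" by (subst (asm) mult_le_cancel2) (use False in simp)
  then have card_S: "card S = r + 1" using S(2) by simp
  then have "degree_sum G S = degree_sum G T"
    using le \<open>card S * r \<le> degree_sum G S\<close> degree_sum_mono[OF T(1) S(1)] eq by simp
  moreover have "is_clique G S"
    using S(1) T(2) deg card_S by (intro full_degree_imp_clique) auto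
  ultimately show ?thesis
    using degree_sum_eq_imp_edges_within[OF T(1) S(1)] S(1) card_S by blast
qed

end

section \<open>Connected graphs and their universal vertices\<close>

locale conn_sgraph = sgraph +
  assumes connected: "connected_graph G" and two_verts: "2 \<le> card V"
begin

abbreviation "U \<equiv> universal_verts G"
abbreviation "W \<equiv> V - U"

lemma verts_nonempty: "V \<noteq> {}"
  using connected by (simp add: connected_graph_def)

lemma exists_other_vertex: "u \<in> V \<Longrightarrow> \<exists>v\<in>V. v \<noteq> u"
  using two_verts card_mono[OF finite.insertI[OF finite.emptyI], of V u] by force

lemma shortest_walk:
  assumes "u \<in> V" "v \<in> V"
  shows "\<exists>ys. walk G ys \<and> hd ys = u \<and> last ys = v \<and> length ys = Suc (gdist G u v)"
proof -
  obtain xs where xs: "walk G xs" "hd xs = u" "last xs = v"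
    using connected assms unfolding connected_graph_def by blast
  then have "\<exists>m ys. walk G ys \<and> hd ys = u \<and> last ys = v \<and> length ys = Suc m"
    by (intro exI[of _ "length xs - 1"] exI[of _ xs]) (auto simp: walk_def)
  then show ?thesis unfolding gdist_def by (rule LeastI_ex)
qed

lemma gdist_ge_1:
  assumes "u \<in> V" "v \<in> V" "u \<noteq> v"
  shows "1 \<le> gdist G u v"
proof (rule ccontr)
  obtain ys where ys: "walk G ys" "hd ys = u" "last ys = v" "length ys = Suc (gdist G u v)"
    using shortest_walk assms by blast
  assume "\<not> 1 \<le> gdist G u v"
  then have "length ys = Suc 0" using ys(4) by simp
  then obtain a where "ys = [a]" by (auto simp: length_Suc_conv)
  then show False using ys assms(3) by simp
qed

lemma gdist_ge_2:
  assumes "u \<in> V" "v \<in> V" "u \<noteq> v" "\<not> adj G u v"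
  shows "2 \<le> gdist G u v"
proof -
  obtain ys where ys: "walk G ys" "hd ys = u" "last ys = v" "length ys = Suc (gdist G u v)"
    using shortest_walk assms by blast
  have "gdist G u v \<noteq> 1"
  proof
    assume "gdist G u v = 1"
    then have "length ys = Suc (Suc 0)" using ys(4) by simp
    then obtain a b where "ys = [a, b]" by (auto simp: length_Suc_conv)
    then show False using ys assms(4) by (auto simp: walk_def)
  qed
  then show ?thesis using gdist_ge_1 assms by fastforce
qed

lemma walk_first_step:
  assumes "walk G ys" "hd ys = u" "last ys = v" "u \<noteq> v"
  shows "\<exists>w\<in>V. adj G u w"
proof -
  have "Suc 0 < length ys"
    using assms by (cases ys) (auto simp: walk_def)
  then have "adj G (ys ! 0) (ys ! Suc 0)" using assms(1) by (simp add: walk_def)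
  moreover have "ys ! 0 = u" using assms(1,2) by (simp add: walk_def hd_conv_nth)
  ultimately show ?thesis using adj_in_verts by blast
qed

lemma nbhd_nonempty:
  assumes u: "u \<in> V" shows "N V u \<noteq> {}"
proof -
  obtain v where v: "v \<in> V" "v \<noteq> u" using exists_other_vertex[OF u] by blast
  then obtain ys where "walk G ys" "hd ys = u" "last ys = v" using shortest_walk u by blast
  then obtain w where "w \<in> V" "adj G u w" using walk_first_step v(2) by metis
  then show ?thesis by (auto simp: nbhd_def)
qed

lemma universal_subset: "U \<subseteq> V"
  by (auto simp: universal_verts_def)

lemma finite_universal: "finite U"
  using finite_subset[OF universal_subset finite_verts] .

lemma card_nonuniversal: "card W = card V - card U"
  using universal_subset finite_universal by (simp add: card_Diff_subset)

lemma adj_universal: "u \<in> U \<Longrightarrow> v \<in> V \<Longrightarrow> v \<noteq> u \<Longrightarrow> adj G u v \<and> adj G v u"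
  by (auto simp: universal_verts_def adj_sym)

lemma ecc_universal:
  assumes u: "u \<in> U" shows "ecc G u = 1"
proof (rule antisym)
  have uV: "u \<in> V" using u by (simp add: universal_verts_def)
  show "ecc G u \<le> 1"
  proof (rule ecc_le[OF verts_nonempty])
    fix v assume "v \<in> V"
    then show "gdist G u v \<le> 1"
      using u gdist_le_1 gdist_le_walk[of "[u]" u u] uV
      by (cases "v = u") (auto simp: universal_verts_def walk_def)
  qed
  obtain v where "v \<in> V" "v \<noteq> u" "adj G u v"
    using exists_other_vertex[OF uV] u by (auto simp: universal_verts_def)
  then show "1 \<le> ecc G u" using gdist_ge_1[OF uV] ecc_ge by metis
qed

lemma ecc_ge_2:
  assumes "u \<in> W" shows "2 \<le> ecc G u"
proof -
  obtain v where "v \<in> V" "v \<noteq> u" "\<not> adj G u v"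
    using assms by (auto simp: universal_verts_def)
  then show ?thesis using gdist_ge_2 ecc_ge assms by blast
qed

lemma ecc_eq_2:
  assumes u: "u \<in> W" and x: "x \<in> U"
  shows "ecc G u = 2"
proof (rule antisym)
  have "u \<noteq> x" using u x by auto
  then have "adj G u x" using u x adj_universal by blast
  show "ecc G u \<le> 2"
  proof (rule ecc_le[OF verts_nonempty])
    fix v assume v: "v \<in> V"
    show "gdist G u v \<le> 2"
    proof (cases "v = x")
      case True
      then show ?thesis using gdist_le_1[OF \<open>adj G u x\<close>] by simp
    next
      case False
      then show ?thesis using adj_universal[OF x v] gdist_le_2[OF \<open>adj G u x\<close>] by blast
    qed
  qed
qed (rule ecc_ge_2[OF u])

lemma nbhd_universal:
  assumes u: "u \<in> U" shows "N V u = (U - {u}) \<union> W"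
proof -
  have "v \<in> N V u \<longleftrightarrow> v \<in> V \<and> v \<noteq> u" for v
    using adj_universal[OF u, of v] adj_in_verts[of u v] unfolding nbhd_def by blast
  then show ?thesis using universal_subset u by auto
qed

lemma nbhd_nonuniversal:
  assumes u: "u \<in> W" shows "N V u = U \<union> N W u"
proof -
  have "adj G u v" if "v \<in> U" for v
    using adj_universal[OF that, of u] u that by auto
  then show ?thesis using universal_subset by (auto simp: nbhd_def)
qed

lemma two_sigma2_eq:
  assumes "U \<noteq> {}"
  shows "2 * sigma2 G = card U * (card U - 1) + 4 * card U * card W + 4 * degree_sum G W"
proof -
  let ?t = "card U" and ?f = "\<lambda>u. \<Sum>v\<in>N V u. ecc G u * ecc G v"
  have ecc_W: "ecc G v = 2" if "v \<in> W" for v using ecc_eq_2 that assms by blast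
  have f_U: "?f u = (?t - 1) + 2 * card W" if u: "u \<in> U" for u
  proof -
    have "?f u = (\<Sum>v\<in>U - {u}. ecc G u * ecc G v) + (\<Sum>v\<in>W. ecc G u * ecc G v)"
      unfolding nbhd_universal[OF u] using finite_universal finite_verts
      by (intro sum.union_disjoint) auto
    also have "\<dots> = (\<Sum>v\<in>U - {u}. 1) + (\<Sum>v\<in>W. 2)"
      using u ecc_W by (simp add: ecc_universal)
    finally show ?thesis using u finite_universal by simp
  qed
  have f_W: "?f u = 2 * ?t + 4 * card (N W u)" if u: "u \<in> W" for u
  proof -
    have "?f u = (\<Sum>v\<in>U. ecc G u * ecc G v) + (\<Sum>v\<in>N W u. ecc G u * ecc G v)"
      unfolding nbhd_nonuniversal[OF u] using finite_universal finite_verts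
      by (intro sum.union_disjoint) (auto simp: finite_nbhd nbhd_def)
    also have "\<dots> = (\<Sum>v\<in>U. 2) + (\<Sum>v\<in>N W u. 4)"
      using u ecc_W subsetD[OF nbhd_subset[of W u]] by (simp add: ecc_universal)
    finally show ?thesis by simp
  qed
  have "2 * sigma2 G = (\<Sum>u\<in>U. ?f u) + (\<Sum>u\<in>W. ?f u)"
    unfolding sigma2_def double_sum_edges_prod
    using sum.subset_diff[OF universal_subset finite_verts, of ?f] by simp
  also have "\<dots> = ?t * ((?t - 1) + 2 * card W) + (card W * (2 * ?t) + 4 * degree_sum G W)"
    using f_U f_W by (simp add: degree_sum_def sum.distrib sum_distrib_left)
  finally show ?thesis by (simp add: distrib_left mult.commute mult.left_commute)
qed

lemma sigma2_ge_degree_sum: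
  assumes "U = {}"
  shows "2 * degree_sum G V \<le> sigma2 G"
proof -
  have "4 * degree_sum G V = (\<Sum>u\<in>V. \<Sum>v\<in>N V u. 4)"
    by (simp add: degree_sum_def sum_distrib_left mult.commute)
  also have "\<dots> \<le> (\<Sum>u\<in>V. \<Sum>v\<in>N V u. ecc G u * ecc G v)"
  proof (intro sum_mono)
    fix u v assume "u \<in> V" "v \<in> N V u"
    then have "2 \<le> ecc G u" "2 \<le> ecc G v"
      using ecc_ge_2 assms nbhd_subset[of V u] by auto
    then show "4 \<le> ecc G u * ecc G v" using mult_le_mono by fastforce
  qed
  finally show ?thesis unfolding sigma2_def double_sum_edges_prod[symmetric] by simp
qed

lemma clique_card_le:
  assumes "chromatic_number G = k \<or> clique_number G = k" "is_clique G C"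
  shows "card C \<le> k"
  using assms clique_card_le_colors[OF _ colorable_chromatic_number] clique_card_le_clique_number
  by blast

lemma universal_is_clique: "is_clique G U"
  using universal_subset adj_universal by (auto simp: is_clique_def)

lemma card_universal_less:
  assumes kk: "chromatic_number G = k \<or> clique_number G = k" and kn: "k < card V"
  shows "card U < k"
proof (cases "W = {}")
  case True
  then have "U = V" using universal_subset by auto
  then show ?thesis using clique_card_le[OF kk universal_is_clique] kn by simp
next
  case False
  then obtain w where w: "w \<in> W" by auto
  then have "is_clique G (insert w U)"
    using universal_is_clique adj_universal by (auto simp: is_clique_def)
  then have "card (insert w U) \<le> k" by (rule clique_card_le[OF kk])
  then show ?thesis using w finite_universal by simp
qed

lemma colorable_add_universal:
  assumes "colorable G W q" shows "colorable G V (q + card U)"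
proof -
  have "colorable G (W \<union> U) (q + card U)"
    using assms colorable_card[OF finite_universal] by (rule colorable_Un)
  moreover have "W \<union> U = V" using universal_subset by blast
  ultimately show ?thesis by simp
qed

text \<open>The witness is a maximum clique minus \<open>U\<close>, or a minimal subset of \<open>V - U\<close> that is not
  \<open>(k - 1 - |U|)\<close>-colourable.\<close>
lemma exists_dense_nonuniversal_subset:
  assumes kk: "chromatic_number G = k \<or> clique_number G = k" and k: "1 \<le> k" "k < card V"
  shows "\<exists>S\<subseteq>W. k - card U \<le> card S \<and> (\<forall>u\<in>S. k - card U - 1 \<le> card (N S u))"
proof (cases "chromatic_number G = k")
  case True
  have t: "card U < k" using card_universal_less kk k by blast
  have "\<not> colorable G W (k - 1 - card U)"
  proof
    assume "colorable G W (k - 1 - card U)"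
    then have "colorable G V (k - 1 - card U + card U)" by (rule colorable_add_universal)
    then show False using not_colorable_less_chromatic_number True k t by simp
  qed
  then have "\<exists>S\<subseteq>W. S \<noteq> {} \<and> (\<forall>u\<in>S. k - 1 - card U \<le> card (N S u))"
    using not_colorable_imp_min_degree_subset[OF finite_Diff[OF finite_verts]] by simp
  then obtain S where S: "S \<subseteq> W" "S \<noteq> {}" "\<forall>u\<in>S. k - 1 - card U \<le> card (N S u)"
    by blast
  then obtain u where u: "u \<in> S" by blast
  have finS: "finite S" using S(1) finite_verts finite_subset by blast
  have "k - 1 - card U \<le> card S - 1"
    using le_trans[OF bspec[OF S(3) u] card_nbhd_le[OF finS u]] .
  moreover have "0 < card S" using S(2) finS by (simp add: card_gt_0_iff)
  ultimately have "k - card U \<le> card S" using t by linarith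
  moreover have "\<forall>u\<in>S. k - card U - 1 \<le> card (N S u)"
    using S(3) unfolding diff_commute[of k "card U" 1] .
  ultimately show ?thesis using S(1) by blast
next
  case False
  then obtain C where C: "is_clique G C" "card C = k"
    using kk clique_number_attained by auto
  have finC: "finite C" using C(1) finite_verts finite_subset by (auto simp: is_clique_def)
  have card_S: "k - card U \<le> card (C - U)"
    using diff_card_le_card_Diff[OF finite_universal, of C] C(2) by simp
  moreover have "k - card U - 1 \<le> card (N (C - U) u)" if u: "u \<in> C - U" for u
  proof -
    have "N (C - U) u = C - U - {u}" using C(1) u by (auto simp: nbhd_def is_clique_def)
    then show ?thesis using u finC card_S by simp
  qed
  ultimately show ?thesis using C(1) by (intro exI[of _ "C - U"]) (auto simp: is_clique_def)
qed

end

section \<open>The lower bound\<close>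

context conn_sgraph
begin

lemma degree_sum_nonuniversal_ge:
  assumes kk: "chromatic_number G = k \<or> clique_number G = k" and k: "1 \<le> k" "k < card V"
  shows "(k - card U) * (k - card U - 1) \<le> degree_sum G W"
proof -
  obtain S where S: "S \<subseteq> W" "k - card U \<le> card S" "\<forall>u\<in>S. k - card U - 1 \<le> card (N S u)"
    using exists_dense_nonuniversal_subset[OF kk k] by blast
  have finS: "finite S" using S(1) finite_verts finite_subset by blast
  have "(k - card U) * (k - card U - 1) \<le> card S * (k - card U - 1)"
    using S(2) by (rule mult_right_mono) simp
  also have "\<dots> \<le> degree_sum G S" by (rule degree_sum_ge_min_degree[OF finS S(3)])
  also have "\<dots> \<le> degree_sum G W" by (rule degree_sum_mono[OF _ S(1)]) (simp add: finite_verts)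
  finally show ?thesis .
qed

lemma sigma2_eq_join_sigma2:
  assumes "U \<noteq> {}" "card U \<le> k"
  shows "real (sigma2 G) = join_sigma2 (card V) k (card U)
           + 2 * (real (degree_sum G W) - real ((k - card U) * (k - card U - 1)))"
proof -
  let ?t = "card U"
  have t: "1 \<le> ?t" "?t \<le> card V"
    using assms finite_universal card_mono[OF finite_verts universal_subset]
    by (auto simp: Suc_le_eq card_gt_0_iff)
  have "real (2 * sigma2 G) = real (?t * (?t - 1) + 4 * ?t * card W + 4 * degree_sum G W)"
    using two_sigma2_eq[OF assms(1)] by simp
  then have "2 * real (sigma2 G) = real ?t * (real ?t - 1) + 4 * real ?t * (real (card V) - real ?t)
      + 4 * real (degree_sum G W)"
    using t by (simp add: card_nonuniversal of_nat_diff)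
  moreover obtain m where m: "k = ?t + m" using assms(2) le_iff_add by blast
  then have M: "real ((k - ?t) * (k - ?t - 1)) = (real k - real ?t) * (real k - real ?t - 1)"
    by (cases m) (simp_all add: algebra_simps)
  ultimately show ?thesis unfolding M join_sigma2_def by (simp add: field_simps)
qed

lemma join_shape_universal_clique:
  assumes C: "C \<subseteq> W" "is_clique G C" and edges: "\<forall>u\<in>W. \<forall>v\<in>W. adj G u v \<longrightarrow> u \<in> C \<and> v \<in> C"
  shows "join_shape G U C"
  unfolding join_shape_def
proof (intro conjI ballI)
  fix u v assume uv: "u \<in> V" "v \<in> V"
  show "adj G u v \<longleftrightarrow> u \<noteq> v \<and> (u \<in> U \<or> v \<in> U \<or> u \<in> C \<and> v \<in> C)"
    using adj_universal[of u v] adj_universal[of v u] C edges uv adj_in_verts[of u v]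
    unfolding is_clique_def by blast
qed (use C universal_subset in auto)

lemma iso_extremal_graph_imp_card_universal:
  assumes iso: "graph_iso G (extremal_graph n k s)" and s: "s < k" "k < n"
  shows "card U = s \<and> degree_sum G W = (k - s) * (k - s - 1)"
proof -
  obtain A B where AB: "join_shape G A B" "card A = s" "card B = k - s"
    using join_shape_iso_pullback[OF iso join_shape_extremal_graph] by (auto simp: card_image)
  have "card V = card (verts (extremal_graph n k s))"
    using iso bij_betw_same_card unfolding graph_iso_def by blast
  then have n: "card V = n" using card_verts_extremal_graph s by simp
  have sub: "A \<subseteq> V" "B \<subseteq> V - A" using AB(1) by (auto simp: join_shape_def)
  have "card (V - A - B) = n - k"
    using sub AB n s finite_verts by (simp add: card_Diff_subset finite_subset)
  then have "V - A - B \<noteq> {}" using s(2) by (intro notI) simp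
  moreover have "B \<noteq> {}" using AB(3) s(1) by auto
  ultimately have "U = A" using universal_verts_join_shape[OF AB(1)] by blast
  then show ?thesis using AB degree_sum_join_shape[OF AB(1) finite_verts] by simp
qed

lemma sigma2_ge_join_sigma2:
  assumes kk: "chromatic_number G = k \<or> clique_number G = k" and k: "1 \<le> k" "k < card V"
    and U: "U \<noteq> {}"
  shows "join_sigma2 (card V) k (card U) \<le> real (sigma2 G)"
    and "real (sigma2 G) = join_sigma2 (card V) k (card U)
           \<longleftrightarrow> graph_iso G (extremal_graph (card V) k (card U))"
proof -
  let ?t = "card U" and ?D = "degree_sum G W"
  have t: "?t < k" using card_universal_less kk k by blast
  define M where "M = (k - ?t) * (k - ?t - 1)"
  have D: "M \<le> ?D" unfolding M_def by (rule degree_sum_nonuniversal_ge[OF kk k])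
  have eq: "real (sigma2 G) = join_sigma2 (card V) k ?t + 2 * (real ?D - real M)"
    unfolding M_def by (rule sigma2_eq_join_sigma2[OF U less_imp_le[OF t]])
  then show "join_sigma2 (card V) k ?t \<le> real (sigma2 G)" using D by simp
  have "real (sigma2 G) = join_sigma2 (card V) k ?t \<longleftrightarrow> ?D = M"
    using eq by simp
  also have "\<dots> \<longleftrightarrow> graph_iso G (extremal_graph (card V) k ?t)"
  proof
    assume D_eq: "?D = M"
    obtain S where S: "S \<subseteq> W" "k - ?t \<le> card S" "\<forall>u\<in>S. k - ?t - 1 \<le> card (N S u)"
      using exists_dense_nonuniversal_subset[OF kk k] by blast
    have "k - ?t - 1 + 1 = k - ?t" using t by simp
    then obtain C where C: "C \<subseteq> W" "card C = k - ?t" "is_clique G C"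
        "\<forall>u\<in>W. \<forall>v\<in>W. adj G u v \<longrightarrow> u \<in> C \<and> v \<in> C"
      using degree_sum_eq_imp_clique[of W S "k - ?t - 1"] S D_eq finite_verts by (auto simp: M_def)
    have "join_shape G U C" by (rule join_shape_universal_clique[OF C(1,3,4)])
    then show "graph_iso G (extremal_graph (card V) k ?t)"
      using join_shape_imp_iso_extremal_graph[OF _ finite_verts refl C(2)] t k by simp
  next
    assume "graph_iso G (extremal_graph (card V) k ?t)"
    then show "?D = M" unfolding M_def using iso_extremal_graph_imp_card_universal t k by blast
  qed
  finally show "real (sigma2 G) = join_sigma2 (card V) k ?t
           \<longleftrightarrow> graph_iso G (extremal_graph (card V) k ?t)" .
qed

lemma degree_sum_ge_no_universal:
  assumes kk: "chromatic_number G = k \<or> clique_number G = k" and k: "2 \<le> k" "k < card V"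
    and U: "U = {}"
  shows "card V + k * (k - 2) \<le> degree_sum G V"
proof -
  obtain S where S: "S \<subseteq> V" "k \<le> card S" "\<forall>u\<in>S. k - 1 \<le> card (N S u)"
    using exists_dense_nonuniversal_subset[OF kk _ k(2)] k U by auto
  have finS: "finite S" using S(1) finite_verts finite_subset by blast
  have "card S * (k - 1) \<le> (\<Sum>u\<in>S. card (N V u))"
    using degree_sum_ge_min_degree[OF finS S(3)] sum_mono[of S "\<lambda>u. card (N S u)" "\<lambda>u. card (N V u)"]
      card_mono[OF finite_nbhd[OF finite_verts] nbhd_mono[OF S(1)]]
    unfolding degree_sum_def by fastforce
  moreover have "card (V - S) \<le> (\<Sum>u\<in>V - S. card (N V u))"
    using sum_mono[of "V - S" "\<lambda>_. 1" "\<lambda>u. card (N V u)"] nbhd_nonempty finite_nbhd[OF finite_verts]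
    by (fastforce simp: Suc_le_eq card_gt_0_iff)
  moreover have "degree_sum G V = (\<Sum>u\<in>V - S. card (N V u)) + (\<Sum>u\<in>S. card (N V u))"
    unfolding degree_sum_def using sum.subset_diff[OF S(1) finite_verts] .
  moreover have "card (V - S) = card V - card S" "card S \<le> card V"
    using card_Diff_subset[OF finS S(1)] card_mono[OF finite_verts S(1)] by simp_all
  moreover have "k * (k - 2) \<le> card S * (k - 2)" using S(2) by (rule mult_right_mono) simp
  moreover have "card S * (k - 1) = card S * (k - 2) + card S"
    using k(1) by (simp add: algebra_simps flip: mult_Suc_right)
  ultimately show ?thesis by linarith
qed

lemma join_sigma2_one_less_sigma2:
  assumes kk: "chromatic_number G = k \<or> clique_number G = k" and k: "2 \<le> k" "k < card V"
    and U: "U = {}"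
  shows "join_sigma2 (card V) k 1 < real (sigma2 G)"
proof -
  have "2 * (card V + k * (k - 2)) \<le> sigma2 G"
    using mult_le_mono2[OF degree_sum_ge_no_universal[OF assms], of 2] sigma2_ge_degree_sum[OF U]
    by (rule order_trans)
  moreover obtain j where j: "k = j + 2" using k(1) le_iff_add add.commute by metis
  ultimately have "2 * card V + 2 * k * k \<le> sigma2 G + 4 * k" by (simp add: algebra_simps)
  then have "real (2 * card V + 2 * k * k) \<le> real (sigma2 G + 4 * k)" by (rule of_nat_mono)
  then show ?thesis using k(1) by (simp add: join_sigma2_def algebra_simps)
qed

lemma no_universal_imp_not_iso_extremal_graph:
  assumes "U = {}" "1 \<le> s" "s < k" "k < card V"
  shows "\<not> graph_iso G (extremal_graph (card V) k s)"
proof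
  assume "graph_iso G (extremal_graph (card V) k s)"
  then have "card U = s" using iso_extremal_graph_imp_card_universal assms(3,4) by blast
  then show False using assms(1,2) by simp
qed

lemma sigma2_min_from_join_sigma2:
  assumes kk: "chromatic_number G = k \<or> clique_number G = k" and k: "2 \<le> k" "k < card V"
    and bound: "\<And>t. 1 \<le> t \<Longrightarrow> t < k \<Longrightarrow> B \<le> join_sigma2 (card V) k t"
    and attained: "\<And>t. 1 \<le> t \<Longrightarrow> t < k \<Longrightarrow> join_sigma2 (card V) k t = B \<longleftrightarrow> t \<in> A"
    and A: "A \<subseteq> {1..<k}"
  shows "B \<le> real (sigma2 G) \<and>
    (real (sigma2 G) = B \<longleftrightarrow> (\<exists>s\<in>A. graph_iso G (extremal_graph (card V) k s)))"
proof (cases "U = {}")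
  case True
  have "B < real (sigma2 G)"
    using bound[of 1] join_sigma2_one_less_sigma2[OF kk k True] k by simp
  moreover have "\<not> graph_iso G (extremal_graph (card V) k s)" if "s \<in> A" for s
    using no_universal_imp_not_iso_extremal_graph[OF True _ _ k(2)] subsetD[OF A that] by simp
  ultimately show ?thesis by auto
next
  case False
  let ?t = "card U"
  have t: "1 \<le> ?t" "?t < k"
    using False finite_universal card_universal_less[OF kk k(2)] by (auto simp: Suc_le_eq card_gt_0_iff)
  have ge: "join_sigma2 (card V) k ?t \<le> real (sigma2 G)"
    and eq: "real (sigma2 G) = join_sigma2 (card V) k ?t \<longleftrightarrow> graph_iso G (extremal_graph (card V) k ?t)"
    using sigma2_ge_join_sigma2[OF kk _ k(2) False] k by auto
  have "B \<le> real (sigma2 G)" using bound[OF t] ge by linarith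
  moreover have "real (sigma2 G) = B \<longleftrightarrow> (\<exists>s\<in>A. graph_iso G (extremal_graph (card V) k s))"
  proof
    assume min: "real (sigma2 G) = B"
    then have "join_sigma2 (card V) k ?t = B" using bound[OF t] ge by linarith
    then show "\<exists>s\<in>A. graph_iso G (extremal_graph (card V) k s)"
      using attained[OF t] eq min by auto
  next
    assume "\<exists>s\<in>A. graph_iso G (extremal_graph (card V) k s)"
    then obtain s where s: "s \<in> A" "graph_iso G (extremal_graph (card V) k s)" by blast
    then have "s = ?t" using iso_extremal_graph_imp_card_universal A k by auto
    then show "real (sigma2 G) = B" using eq attained[OF t] s by simp
  qed
  ultimately show ?thesis ..
qed

lemma sigma2_min_small_k:
  assumes kk: "chromatic_number G = k \<or> clique_number G = k" and k: "2 \<le> k" "k < n"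
    and n: "card V = n" and small: "k \<le> (n + 1) div 2"
  shows "2 * real n + 2 * real k ^ 2 - 6 * real k + 2 \<le> real (sigma2 G) \<and>
    (real (sigma2 G) = 2 * real n + 2 * real k ^ 2 - 6 * real k + 2 \<longleftrightarrow>
       graph_iso G (extremal_graph n k 1))"
  using sigma2_min_from_join_sigma2[OF kk k(1), of _ "{1}"]
    join_sigma2_min_small_k[of k n] small k n by auto

lemma sigma2_min_medium_k:
  assumes kk: "chromatic_number G = k \<or> clique_number G = k" and k: "2 \<le> k" "k < n"
    and n: "card V = n" and medium: "(n + 1) div 2 < k" "int k < \<lceil>real (2 * n + 1) / 3\<rceil>"
  shows "(8 * real k - 3) * real n - 2 * real n ^ 2 - 6 * real k ^ 2 + 4 * real k - 1 \<le> real (sigma2 G) \<and>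
    (real (sigma2 G) = (8 * real k - 3) * real n - 2 * real n ^ 2 - 6 * real k ^ 2 + 4 * real k - 1 \<longleftrightarrow>
       (\<exists>s::nat. (int s = 4 * int k - 2 * int n - 2 \<or> int s = 4 * int k - 2 * int n - 1) \<and>
          graph_iso G (extremal_graph n k s)))"
proof -
  let ?A = "{s. int s = 4 * int k - 2 * int n - 2 \<or> int s = 4 * int k - 2 * int n - 1}"
  let ?B = "(8 * real k - 3) * real n - 2 * real n ^ 2 - 6 * real k ^ 2 + 4 * real k - 1"
  have "3 * k \<le> 2 * n" using medium(2) by (simp add: less_ceiling_iff)
  then have A: "?A \<subseteq> {1..<k}" using medium(1) by auto
  have "?B \<le> real (sigma2 G) \<and> (real (sigma2 G) = ?B \<longleftrightarrow> (\<exists>s\<in>?A. graph_iso G (extremal_graph n k s)))"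
    using sigma2_min_from_join_sigma2[OF kk k(1) k(2)[folded n], of ?B ?A]
      join_sigma2_min_medium_k[where n = n and k = k] A n by simp
  then show ?thesis by auto
qed

lemma sigma2_min_large_k:
  assumes kk: "chromatic_number G = k \<or> clique_number G = k" and k: "2 \<le> k" "k < n"
    and n: "card V = n" and large: "\<lceil>real (2 * n + 1) / 3\<rceil> \<le> int k"
  shows "2 * (real k - 1) * real n - 3 * real k ^ 2 / 2 + 5 * real k / 2 - 1 \<le> real (sigma2 G) \<and>
    (real (sigma2 G) = 2 * (real k - 1) * real n - 3 * real k ^ 2 / 2 + 5 * real k / 2 - 1 \<longleftrightarrow>
       graph_iso G (extremal_graph n k (k - 1)))"
proof -
  have "2 * n + 1 \<le> 3 * k" using large by (simp add: ceiling_le_iff)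
  then show ?thesis
    using sigma2_min_from_join_sigma2[OF kk k(1), of _ "{k - 1}"]
      join_sigma2_min_large_k[of n k] k n by auto
qed

end

theorem theorem4p5:
  fixes G :: "'a graph" and n k :: nat
  assumes "simple_graph G" and "connected_graph G" and "card (verts G) = n"
    and "2 \<le> k" and "k \<le> n - 1"
    and "chromatic_number G = k \<or> clique_number G = k"
  shows
    "(k \<le> (n + 1) div 2 \<longrightarrow>
        real (sigma2 G) \<ge> 2 * real n + 2 * real k ^ 2 - 6 * real k + 2 \<and>
        (real (sigma2 G) = 2 * real n + 2 * real k ^ 2 - 6 * real k + 2 \<longleftrightarrow>
           graph_iso G (extremal_graph n k 1)))
     \<and> ((n + 1) div 2 < k \<and> int k < \<lceil>real (2 * n + 1) / 3\<rceil> \<longrightarrow>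
        real (sigma2 G) \<ge> (8 * real k - 3) * real n - 2 * real n ^ 2 - 6 * real k ^ 2 + 4 * real k - 1 \<and>
        (real (sigma2 G) = (8 * real k - 3) * real n - 2 * real n ^ 2 - 6 * real k ^ 2 + 4 * real k - 1 \<longleftrightarrow>
           (\<exists>s::nat. (int s = 4 * int k - 2 * int n - 2 \<or> int s = 4 * int k - 2 * int n - 1) \<and>
              graph_iso G (extremal_graph n k s))))
     \<and> (\<lceil>real (2 * n + 1) / 3\<rceil> \<le> int k \<longrightarrow>
        real (sigma2 G) \<ge> 2 * (real k - 1) * real n - 3 * real k ^ 2 / 2 + 5 * real k / 2 - 1 \<and>
        (real (sigma2 G) = 2 * (real k - 1) * real n - 3 * real k ^ 2 / 2 + 5 * real k / 2 - 1 \<longleftrightarrow>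
           graph_iso G (extremal_graph n k (k - 1))))"
proof -
  have k: "2 \<le> k" "k < n" using assms(4,5) by linarith+
  interpret conn_sgraph G
    using assms(1-3) k by unfold_locales auto
  show ?thesis
    using sigma2_min_small_k[OF assms(6) k assms(3)] sigma2_min_medium_k[OF assms(6) k assms(3)]
      sigma2_min_large_k[OF assms(6) k assms(3)]
    by blast
qed

end
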